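(* Let $G$ be a simple and nonabelian finite subgroup of $\mathrm{PGL}(3,\mathbb{C})$. Then there is a subgroup $\widetilde{G} \subset \mathrm{SL}(3,\mathbb{C})$ with $\pi(\widetilde{G}) = G$ such that every projective plane curve invariant under $G$ is defined by a homogeneous polynomial invariant under $\widetilde{G}$.
   Context: $\pi : \mathrm{SL}(3,\mathbb{C})\to\mathrm{PGL}(3,\mathbb{C})$ is the natural homomorphism, and $\mathrm{PGL}(3,\mathbb{C})$ acts on $\mathbb{P}^2$ via $[A]\cdot(a:b:c) = [A(a,b,c)^t]$. A projective plane curve is a nonzero effective divisor on $\mathbb{P}^2$; it is invariant under $G$ if $\sigma_* C = C$ for all $\sigma \in G$. For $A \in \mathrm{GL}(3,\mathbb{C})$ and a homogeneous polynomial $f$, set $f^A(\mathbf{x}) = f(A\mathbf{x})$ (with $\mathbf{x}$ the column vector $(x,y,z)^t$); $f$ is invariant under $\widetilde{G}$ if $f^A = f$ for all $A \in \widetilde{G}$. A curve $C$ is defined by $f$ if $C$ is the divisor of zeros of $f$. *)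

theory Defs
  imports "HOL-Analysis.Analysis" "HOL-Algebra.SimpleGroups"
begin

type_synonym cmat = "complex^3^3"
type_synonym cvec = "complex^3"

definition pgl_class :: "cmat \<Rightarrow> cmat set" where
  "pgl_class A = {(\<chi> i j. c * A $ i $ j) | c. c \<noteq> 0}"

definition PGL3 :: "cmat set monoid" where
  "PGL3 = \<lparr> carrier = pgl_class ` {A. invertible A},
            mult = (\<lambda>X Y. {A ** B | A B. A \<in> X \<and> B \<in> Y}),
            one = pgl_class (mat 1) \<rparr>"

definition SL3 :: "cmat monoid" where
  "SL3 = \<lparr> carrier = {A. det A = 1}, mult = (**), one = mat 1 \<rparr>"

definition pi3 :: "cmat \<Rightarrow> cmat set" where
  "pi3 A = pgl_class A"

text \<open>Homogeneous polynomials of degree d in x,y,z (as polynomial functions on C^3;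
  since C is infinite these correspond bijectively to polynomials).\<close>
definition hom_poly :: "nat \<Rightarrow> (cvec \<Rightarrow> complex) \<Rightarrow> bool" where
  "hom_poly d F \<longleftrightarrow> (\<exists>c :: nat \<Rightarrow> nat \<Rightarrow> nat \<Rightarrow> complex. \<forall>v.
     F v = (\<Sum>(i,j,k) \<in> {(i,j,k). i + j + k = d}. c i j k * v$1 ^ i * v$2 ^ j * v$3 ^ k))"

text \<open>The curve (effective divisor) defined by F: determined by F up to nonzero scalar.\<close>
definition curve_of :: "(cvec \<Rightarrow> complex) \<Rightarrow> (cvec \<Rightarrow> complex) set" where
  "curve_of F = {(\<lambda>v. c * F v) | c. c \<noteq> 0}"

definition plane_curve :: "(cvec \<Rightarrow> complex) set \<Rightarrow> bool" where
  "plane_curve C \<longleftrightarrow> (\<exists>d>0. \<exists>F. hom_poly d F \<and> F \<noteq> (\<lambda>_. 0) \<and> C = curve_of F)"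

definition defines_curve :: "(cvec \<Rightarrow> complex) \<Rightarrow> (cvec \<Rightarrow> complex) set \<Rightarrow> bool" where
  "defines_curve f C \<longleftrightarrow> (\<exists>d. hom_poly d f) \<and> C = curve_of f"

text \<open>Push-forward of a curve by the projective transformation [A]: the image of
  the zero locus of F under x |-> A x is the zero locus of F o A^{-1}.\<close>
definition push_curve :: "cmat \<Rightarrow> (cvec \<Rightarrow> complex) set \<Rightarrow> (cvec \<Rightarrow> complex) set" where
  "push_curve A C = (\<lambda>F v. F (matrix_inv A *v v)) ` C"

definition curve_invariant :: "cmat set set \<Rightarrow> (cvec \<Rightarrow> complex) set \<Rightarrow> bool" where
  "curve_invariant G C \<longleftrightarrow> (\<forall>X \<in> G. \<forall>A \<in> X. push_curve A C = C)"

definition poly_invariant :: "cmat set \<Rightarrow> (cvec \<Rightarrow> complex) \<Rightarrow> bool" where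
  "poly_invariant Gt f \<longleftrightarrow> (\<forall>A \<in> Gt. (\<lambda>v. f (A *v v)) = f)"

end

theory Submission
  imports Defs "HOL-Algebra.Generated_Groups"
begin

(* Let P be the full preimage of G in SL(3,C). An element of P preserves an invariant curve V(F),
   so it multiplies F by a nonzero scalar; as scalars commute, every commutator in P fixes F, and
   so does the derived group P'. Since G is simple and nonabelian it is perfect, and pi maps P onto
   G, so pi(P') = [G,G] = G. Hence P' is the required lift. *)

lemma (in group) comm_group_if_derived_trivial:
  assumes "derived G (carrier G) = {\<one>}"
  shows "comm_group G"
proof (rule group_comm_groupI)
  fix x y assume x: "x \<in> carrier G" and y: "y \<in> carrier G"
  have "x \<otimes> y \<otimes> inv x \<otimes> inv y \<in> derived G (carrier G)"
    unfolding derived_def using x y by (intro generate.incl) blast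
  then have "x \<otimes> y \<otimes> inv x \<otimes> inv y = \<one>"
    using assms by blast
  moreover have "x \<otimes> y = (x \<otimes> y \<otimes> inv x \<otimes> inv y) \<otimes> (y \<otimes> x)"
  proof -
    have "inv y \<otimes> (y \<otimes> x) = x"
      using x y by (simp flip: m_assoc)
    then show ?thesis
      using x y by (simp add: m_assoc)
  qed
  ultimately show "x \<otimes> y = y \<otimes> x"
    using x y by simp
qed

lemma (in simple_group) derived_self_eq_carrier:
  assumes "\<not> comm_group G"
  shows "derived G (carrier G) = carrier G"
  using no_real_normal_subgroup[OF derived_self_is_normal] comm_group_if_derived_trivial assms
  by blast

lemma (in group) derived_eq_self_if_simple_noncomm:
  assumes "subgroup H G" "simple_group (G\<lparr>carrier := H\<rparr>)" "\<not> comm_group (G\<lparr>carrier := H\<rparr>)"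
  shows "derived G H = H"
  using simple_group.derived_self_eq_carrier[OF assms(2,3)] derived_consistent[OF _ assms(1), of H]
  by simp

lemma (in group_hom) image_derived_preimage:
  assumes "h ` carrier G = carrier H" "subgroup K H" "derived H K = K"
  shows "h ` (derived G {g \<in> carrier G. h g \<in> K}) = K"
proof -
  have "h ` {g \<in> carrier G. h g \<in> K} = K"
  proof (intro subset_antisym subsetI)
    fix k assume "k \<in> K"
    then obtain g where "g \<in> carrier G" "k = h g"
      using assms(1) subgroup.subset[OF assms(2)] by blast
    then show "k \<in> h ` {g \<in> carrier G. h g \<in> K}"
      using \<open>k \<in> K\<close> by blast
  qed blast
  then show ?thesis
    using derived_img[of "{g \<in> carrier G. h g \<in> K}"] assms(3) by auto
qed

definition smult_mat :: "'a::times \<Rightarrow> 'a^'n^'m \<Rightarrow> 'a^'n^'m" where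
  "smult_mat c A = (\<chi> i j. c * A $ i $ j)"

lemma smult_mat_mult:
  fixes A :: "'a::comm_semiring_1^'n^'m" and B :: "'a^'k^'n"
  shows "smult_mat c A ** smult_mat d B = smult_mat (c * d) (A ** B)"
  by (simp add: smult_mat_def matrix_matrix_mult_def vec_eq_iff sum_distrib_left mult_ac)

lemma smult_mat_smult_mat [simp]:
  fixes A :: "'a::comm_semiring_1^'n^'m"
  shows "smult_mat c (smult_mat d A) = smult_mat (c * d) A"
  by (simp add: smult_mat_def vec_eq_iff mult_ac)

lemma smult_mat_one [simp]: "smult_mat 1 (A :: 'a::monoid_mult^'n^'m) = A"
  by (simp add: smult_mat_def vec_eq_iff)

lemma det_smult_mat:
  fixes A :: "'a::comm_ring_1^'n^'n"
  shows "det (smult_mat c A) = c ^ CARD('n) * det A"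
proof -
  have "smult_mat c A = (\<chi> i. c *s A $ i)"
    by (simp add: smult_mat_def vec_eq_iff)
  then show ?thesis
    using det_rows_mul[of "\<lambda>i. c" "\<lambda>i. A $ i"] by simp
qed

lemma matrix_inv_right: "invertible A \<Longrightarrow> A ** matrix_inv A = mat 1"
  and matrix_inv_left: "invertible A \<Longrightarrow> matrix_inv A ** A = mat 1"
  unfolding matrix_inv_def invertible_def by (metis (mono_tags, lifting) someI_ex)+

lemma invertible_matrix_inv: "invertible A \<Longrightarrow> invertible (matrix_inv A)"
  using matrix_inv_left matrix_inv_right unfolding invertible_def by blast

lemma scale_factor_right_inverse:
  fixes A B :: "'a::comm_semiring_1^'n^'n" and F :: "'a^'n \<Rightarrow> 'b::field"
  assumes "A ** B = mat 1" "\<And>v. F (A *v v) = c * F v" "c \<noteq> 0"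
  shows "F (B *v v) = inverse c * F v"
proof -
  have "F v = F (A *v (B *v v))"
    using assms(1) by (simp add: matrix_vector_mul_assoc)
  also have "\<dots> = c * F (B *v v)"
    by (rule assms(2))
  finally show ?thesis
    using assms(3) by (simp flip: mult.assoc)
qed

lemma commutator_fixes_if_scale_factors:
  fixes A B :: "'a::field^'n^'n" and F :: "'a^'n \<Rightarrow> 'b::field"
  assumes "invertible A" "invertible B"
    and "\<And>v. F (A *v v) = a * F v" "a \<noteq> 0"
    and "\<And>v. F (B *v v) = b * F v" "b \<noteq> 0"
  shows "F ((A ** B ** matrix_inv A ** matrix_inv B) *v v) = F v"
proof -
  have "F (matrix_inv A *v w) = inverse a * F w" "F (matrix_inv B *v w) = inverse b * F w" for w
    using scale_factor_right_inverse matrix_inv_right assms by blast+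
  then have "F ((A ** B ** matrix_inv A ** matrix_inv B) *v v)
      = a * (b * (inverse a * (inverse b * F v)))"
    using assms by (simp add: matrix_vector_mul_assoc[symmetric])
  also have "\<dots> = F v"
    using assms(4,6) by (simp add: field_simps)
  finally show ?thesis .
qed

lemma pgl_class_eq: "pgl_class A = {smult_mat c A | c. c \<noteq> 0}"
  unfolding pgl_class_def smult_mat_def by simp

lemma mem_pgl_class_self: "A \<in> pgl_class A"
  unfolding pgl_class_eq by (intro CollectI exI[of _ 1]) simp

lemma pgl_class_eqI: "B \<in> pgl_class A \<Longrightarrow> pgl_class B = pgl_class A"
proof -
  assume "B \<in> pgl_class A"
  then obtain c where c: "c \<noteq> 0" "B = smult_mat c A"
    unfolding pgl_class_eq by auto
  show ?thesis
    unfolding pgl_class_eq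
  proof (intro subset_antisym subsetI)
    fix X assume "X \<in> {smult_mat d B | d. d \<noteq> 0}"
    then obtain d where "d \<noteq> 0" "X = smult_mat (d * c) A"
      using c by auto
    then show "X \<in> {smult_mat d A | d. d \<noteq> 0}"
      using c(1) by auto
  next
    fix X assume "X \<in> {smult_mat d A | d. d \<noteq> 0}"
    then obtain d where "d \<noteq> 0" "X = smult_mat (d / c) B"
      using c by auto
    then show "X \<in> {smult_mat d B | d. d \<noteq> 0}"
      using c(1) by auto
  qed
qed

lemma pgl_class_mult:
  "{X ** Y | X Y. X \<in> pgl_class A \<and> Y \<in> pgl_class B} = pgl_class (A ** B)"
proof (intro subset_antisym subsetI)
  fix Z assume "Z \<in> {X ** Y | X Y. X \<in> pgl_class A \<and> Y \<in> pgl_class B}"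
  then show "Z \<in> pgl_class (A ** B)"
    unfolding pgl_class_eq by (auto simp: smult_mat_mult)
next
  fix Z assume "Z \<in> pgl_class (A ** B)"
  then obtain c where "c \<noteq> 0" "Z = smult_mat c (A ** B)"
    unfolding pgl_class_eq by auto
  then have "Z = smult_mat c A ** B" "smult_mat c A \<in> pgl_class A"
    using smult_mat_mult[of c A 1 B] unfolding pgl_class_eq by auto
  then show "Z \<in> {X ** Y | X Y. X \<in> pgl_class A \<and> Y \<in> pgl_class B}"
    using mem_pgl_class_self by blast
qed

lemma PGL3_mult_pgl_class: "pgl_class A \<otimes>\<^bsub>PGL3\<^esub> pgl_class B = pgl_class (A ** B)"
  by (simp add: PGL3_def pgl_class_mult)

lemma group_PGL3: "group PGL3"
proof (rule groupI)
  show "\<one>\<^bsub>PGL3\<^esub> \<in> carrier PGL3"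
    by (auto simp: PGL3_def invertible_def)
next
  fix x y assume "x \<in> carrier PGL3" "y \<in> carrier PGL3"
  then show "x \<otimes>\<^bsub>PGL3\<^esub> y \<in> carrier PGL3"
    by (auto simp: PGL3_def pgl_class_mult invertible_mult)
next
  fix x y z assume "x \<in> carrier PGL3" "y \<in> carrier PGL3" "z \<in> carrier PGL3"
  then obtain A B C where "x = pgl_class A" "y = pgl_class B" "z = pgl_class C"
    by (auto simp: PGL3_def)
  then show "x \<otimes>\<^bsub>PGL3\<^esub> y \<otimes>\<^bsub>PGL3\<^esub> z = x \<otimes>\<^bsub>PGL3\<^esub> (y \<otimes>\<^bsub>PGL3\<^esub> z)"
    by (simp add: PGL3_mult_pgl_class matrix_mul_assoc)
next
  fix x assume "x \<in> carrier PGL3"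
  then obtain A where "x = pgl_class A"
    by (auto simp: PGL3_def)
  then show "\<one>\<^bsub>PGL3\<^esub> \<otimes>\<^bsub>PGL3\<^esub> x = x"
    using PGL3_mult_pgl_class[of "mat 1" A] by (simp add: PGL3_def)
next
  fix x assume "x \<in> carrier PGL3"
  then obtain A where A: "invertible A" "x = pgl_class A"
    by (auto simp: PGL3_def)
  have "pgl_class (matrix_inv A) \<otimes>\<^bsub>PGL3\<^esub> x = \<one>\<^bsub>PGL3\<^esub>"
    using A matrix_inv_left[OF A(1)] by (simp add: PGL3_mult_pgl_class) (simp add: PGL3_def)
  moreover have "pgl_class (matrix_inv A) \<in> carrier PGL3"
    using invertible_matrix_inv[OF A(1)] by (simp add: PGL3_def)
  ultimately show "\<exists>y\<in>carrier PGL3. y \<otimes>\<^bsub>PGL3\<^esub> x = \<one>\<^bsub>PGL3\<^esub>"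
    by blast
qed

lemma invertible_if_SL3: "A \<in> carrier SL3 \<Longrightarrow> invertible A"
  by (simp add: SL3_def invertible_det_nz)

lemma det_matrix_inv_SL3:
  assumes "A \<in> carrier SL3" shows "det (matrix_inv A) = 1"
  using assms det_mul[of "matrix_inv A" A] matrix_inv_left[OF invertible_if_SL3[OF assms]]
  by (simp add: SL3_def)

lemma group_SL3: "group SL3"
proof (rule groupI)
  fix A assume A: "A \<in> carrier SL3"
  then have "matrix_inv A \<in> carrier SL3" "matrix_inv A ** A = mat 1"
    using det_matrix_inv_SL3 matrix_inv_left invertible_if_SL3 by (auto simp: SL3_def)
  then show "\<exists>B\<in>carrier SL3. B \<otimes>\<^bsub>SL3\<^esub> A = \<one>\<^bsub>SL3\<^esub>"
    by (auto simp: SL3_def)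
qed (auto simp: SL3_def det_mul matrix_mul_assoc)

lemma inv_SL3:
  assumes "A \<in> carrier SL3" shows "inv\<^bsub>SL3\<^esub> A = matrix_inv A"
proof (rule group.inv_equality[OF group_SL3])
  show "matrix_inv A \<otimes>\<^bsub>SL3\<^esub> A = \<one>\<^bsub>SL3\<^esub>"
    using matrix_inv_left[OF invertible_if_SL3[OF assms]] by (simp add: SL3_def)
  show "matrix_inv A \<in> carrier SL3"
    using det_matrix_inv_SL3[OF assms] by (simp add: SL3_def)
qed (rule assms)

lemma group_hom_pi3: "group_hom SL3 PGL3 pi3"
proof -
  have "pi3 \<in> hom SL3 PGL3"
  proof (rule homI)
    fix A assume "A \<in> carrier SL3"
    then show "pi3 A \<in> carrier PGL3"
      by (simp add: PGL3_def pi3_def invertible_if_SL3)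
  next
    fix A B assume "A \<in> carrier SL3" "B \<in> carrier SL3"
    then show "pi3 (A \<otimes>\<^bsub>SL3\<^esub> B) = pi3 A \<otimes>\<^bsub>PGL3\<^esub> pi3 B"
      by (simp add: SL3_def pi3_def PGL3_mult_pgl_class)
  qed
  then show ?thesis
    using group_PGL3 group_SL3 by (simp add: group_hom_def group_hom_axioms_def)
qed

lemma pi3_surj: "pi3 ` carrier SL3 = carrier PGL3"
proof (intro subset_antisym subsetI)
  fix X assume "X \<in> pi3 ` carrier SL3"
  then show "X \<in> carrier PGL3"
    using group_hom.hom_closed[OF group_hom_pi3] by blast
next
  fix X assume "X \<in> carrier PGL3"
  then obtain A where A: "invertible A" "X = pgl_class A"
    by (auto simp: PGL3_def)
  then have "det A \<noteq> 0"
    using invertible_det_nz by blast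
  obtain w where w: "1 / det A = w ^ 3"
    by (rule exists_complex_root[of 3]) simp
  then have "w \<noteq> 0"
    using \<open>det A \<noteq> 0\<close> by auto
  have "det (smult_mat w A) = 1"
    using \<open>det A \<noteq> 0\<close> by (simp add: det_smult_mat flip: w)
  then have "smult_mat w A \<in> carrier SL3" "smult_mat w A \<in> pgl_class A"
    using \<open>w \<noteq> 0\<close> unfolding pgl_class_eq SL3_def by auto
  then show "X \<in> pi3 ` carrier SL3"
    using A pgl_class_eqI unfolding pi3_def by blast
qed

lemma in_curve_of_iff: "F' \<in> curve_of F \<longleftrightarrow> (\<exists>c. c \<noteq> 0 \<and> (\<forall>v. F' v = c * F v))"
  unfolding curve_of_def by (auto simp: fun_eq_iff)

lemma scale_factor_if_curve_invariant:
  assumes "curve_invariant G (curve_of F)" "X \<in> G" "A \<in> X" "invertible A"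
  obtains c where "c \<noteq> 0" "\<And>v. F (A *v v) = c * F v"
proof -
  have "F \<in> curve_of F"
    unfolding in_curve_of_iff by (intro exI[of _ 1]) simp
  then have "(\<lambda>v. F (matrix_inv A *v v)) \<in> push_curve A (curve_of F)"
    unfolding push_curve_def by blast
  then have "(\<lambda>v. F (matrix_inv A *v v)) \<in> curve_of F"
    using assms(1-3) unfolding curve_invariant_def by blast
  then obtain c where c: "c \<noteq> 0" "\<And>v. F (matrix_inv A *v v) = c * F v"
    unfolding in_curve_of_iff by blast
  then have "F (A *v v) = inverse c * F v" for v
    using scale_factor_right_inverse[OF matrix_inv_left[OF assms(4)]] by blast
  then show ?thesis
    using that[of "inverse c"] c(1) by simp
qed

definition SL3_stabilizer :: "(cvec \<Rightarrow> complex) \<Rightarrow> cmat set" where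
  "SL3_stabilizer F = {A \<in> carrier SL3. (\<lambda>v. F (A *v v)) = F}"

lemma subgroup_SL3_stabilizer: "subgroup (SL3_stabilizer F) SL3"
proof (rule group.subgroupI[OF group_SL3])
  show "SL3_stabilizer F \<subseteq> carrier SL3" "SL3_stabilizer F \<noteq> {}"
    unfolding SL3_stabilizer_def by (auto simp: SL3_def intro!: exI[of _ "mat 1"])
next
  fix A assume "A \<in> SL3_stabilizer F"
  then have A: "A \<in> carrier SL3" "\<And>v. F (A *v v) = 1 * F v"
    unfolding SL3_stabilizer_def by (auto simp: fun_eq_iff)
  then have "F (matrix_inv A *v v) = F v" for v
    using scale_factor_right_inverse[OF matrix_inv_right[OF invertible_if_SL3[OF A(1)]], of F 1]
    by simp
  then show "inv\<^bsub>SL3\<^esub> A \<in> SL3_stabilizer F"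
    using A(1) inv_SL3 group.inv_closed[OF group_SL3] unfolding SL3_stabilizer_def by auto
next
  fix A B assume "A \<in> SL3_stabilizer F" "B \<in> SL3_stabilizer F"
  then show "A \<otimes>\<^bsub>SL3\<^esub> B \<in> SL3_stabilizer F"
    unfolding SL3_stabilizer_def
    by (auto simp: SL3_def det_mul fun_eq_iff simp flip: matrix_vector_mul_assoc)
qed

lemma derived_preimage_subset_SL3_stabilizer:
  assumes "curve_invariant G (curve_of F)"
  shows "derived SL3 {A \<in> carrier SL3. pi3 A \<in> G} \<subseteq> SL3_stabilizer F"
  unfolding derived_def
proof (rule group.generate_subgroup_incl[OF group_SL3 _ subgroup_SL3_stabilizer], rule subsetI)
  fix X assume "X \<in> derived_set SL3 {A \<in> carrier SL3. pi3 A \<in> G}"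
  then obtain A B where A: "A \<in> carrier SL3" "pi3 A \<in> G" and B: "B \<in> carrier SL3" "pi3 B \<in> G"
    and X: "X = A ** B ** matrix_inv A ** matrix_inv B"
    by (auto simp: inv_SL3) (simp add: SL3_def)
  have "A \<in> pi3 A" "B \<in> pi3 B"
    unfolding pi3_def by (rule mem_pgl_class_self)+
  obtain a where "a \<noteq> 0" "\<And>v. F (A *v v) = a * F v"
    using scale_factor_if_curve_invariant[OF assms A(2) \<open>A \<in> pi3 A\<close> invertible_if_SL3[OF A(1)]]
    by blast
  moreover obtain b where "b \<noteq> 0" "\<And>v. F (B *v v) = b * F v"
    using scale_factor_if_curve_invariant[OF assms B(2) \<open>B \<in> pi3 B\<close> invertible_if_SL3[OF B(1)]]
    by blast
  ultimately have "F (X *v v) = F v" for v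
    unfolding X
    by (intro commutator_fixes_if_scale_factors[OF invertible_if_SL3[OF A(1)] invertible_if_SL3[OF B(1)]])
  moreover have "X \<in> carrier SL3"
    using A(1) B(1) det_matrix_inv_SL3 unfolding X by (simp add: SL3_def det_mul)
  ultimately show "X \<in> SL3_stabilizer F"
    unfolding SL3_stabilizer_def by auto
qed

theorem mainTheorem8:
  fixes G :: "cmat set set"
  assumes "subgroup G PGL3"
    and "finite G"
    and "simple_group (PGL3\<lparr>carrier := G\<rparr>)"
    and "\<not> comm_group (PGL3\<lparr>carrier := G\<rparr>)"
  shows "\<exists>Gt. subgroup Gt SL3 \<and> pi3 ` Gt = G \<and>
           (\<forall>C. plane_curve C \<and> curve_invariant G C \<longrightarrow>
                (\<exists>f. defines_curve f C \<and> poly_invariant Gt f))"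
proof -
  interpret pi3: group_hom SL3 PGL3 pi3
    by (rule group_hom_pi3)
  define Gt where "Gt = derived SL3 {A \<in> carrier SL3. pi3 A \<in> G}"
  have "subgroup Gt SL3"
    unfolding Gt_def by (rule pi3.G.derived_is_subgroup) blast
  moreover have "pi3 ` Gt = G"
    unfolding Gt_def
    using pi3.image_derived_preimage[OF pi3_surj assms(1)]
      pi3.H.derived_eq_self_if_simple_noncomm[OF assms(1,3,4)] by blast
  moreover have "\<exists>f. defines_curve f C \<and> poly_invariant Gt f"
    if plane: "plane_curve C" and invariant: "curve_invariant G C" for C
  proof -
    obtain d F where "hom_poly d F" "C = curve_of F"
      using plane unfolding plane_curve_def by blast
    then have "defines_curve F C" "Gt \<subseteq> SL3_stabilizer F"
      unfolding defines_curve_def Gt_def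
      using derived_preimage_subset_SL3_stabilizer invariant by blast+
    then show ?thesis
      unfolding poly_invariant_def SL3_stabilizer_def by blast
  qed
  ultimately show ?thesis
    by blast
qed

end
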